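(* Let $d\ge2$, $R>0$. For every Borel measure $\nu$ on $\mathcal{S}^-_R\times\mathcal{S}^+_R$ whose marginals on $\mathcal{S}^-_R$ and $\mathcal{S}^+_R$ are $\mu_-$ and $\mu_+$ respectively, $$\int_{\mathcal{S}^-_R\times\mathcal{S}^+_R}|\eta-\eta^+|\,d\nu(\eta,\eta^+)\ \ge\ s_{d-1}\,b_d\,R^d,$$ and equality is attained by the measure concentrated on pairs $(\eta,\eta^+)$ with $(\eta_1,\dots,\eta_{d-1})=(\eta^+_1,\dots,\eta^+_{d-1})$ (vertical transport).
   Context: Let $S^{d-1}_R=\{x\in\mathbb{R}^d:|x|=R\}$ and $\mathcal{S}^\pm_R=\{\eta\in S^{d-1}_R:\pm\eta_d\ge0\}$ the upper/lower hemispheres. Let $\mu_\pm=s_{d-1}\,d\eta'$ on $\mathcal{S}^\pm_R$, where $d\eta'$ assigns to a Borel set the $(d-1)$-dimensional Lebesgue measure of its orthogonal projection onto $\{\eta_d=0\}$. $s_{d-1}=2\pi^{d/2}/\Gamma(d/2)$ is the area of the unit sphere $S^{d-1}$ and $b_d=2\pi^{d/2}/(d\Gamma(d/2))$ is the volume of the unit ball in $\mathbb{R}^d$. *)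

theory Defs
  imports "HOL-Analysis.Analysis"
begin

text \<open>Points of R^d are represented as pairs (x', x_d) with x' in R^(d-1) = real^'m
  and x_d the last coordinate; d = CARD('m) + 1, so d \<ge> 2 automatically.\<close>

type_synonym 'm pt = "(real^'m) \<times> real"

definition sphere_area :: "nat \<Rightarrow> real" where
  "sphere_area d = 2 * pi powr (real d / 2) / Gamma (real d / 2)"

definition ball_vol :: "nat \<Rightarrow> real" where
  "ball_vol d = 2 * pi powr (real d / 2) / (real d * Gamma (real d / 2))"

definition upper_hemi :: "real \<Rightarrow> ('m::finite) pt set" where
  "upper_hemi R = {\<eta>. norm \<eta> = R \<and> snd \<eta> \<ge> 0}"

definition lower_hemi :: "real \<Rightarrow> ('m::finite) pt set" where
  "lower_hemi R = {\<eta>. norm \<eta> = R \<and> snd \<eta> \<le> 0}"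

text \<open>mu_pm = s_{d-1} d\<eta>' : the measure of a Borel set A of the hemisphere is s_{d-1} times
  the (d-1)-dimensional Lebesgue measure of its projection onto {\<eta>_d = 0}.  Since the
  projection restricted to a closed hemisphere is a bijection onto the closed ball of
  radius R, with inverse the graph map, this is the push-forward of Lebesgue measure on
  the ball under the graph map, scaled by s_{d-1}.\<close>

definition mu_plus :: "real \<Rightarrow> ('m::finite) pt measure" where
  "mu_plus R = scale_measure (ennreal (sphere_area (CARD('m) + 1)))
     (distr (restrict_space lborel (cball (0::real^'m) R))
            (restrict_space borel (upper_hemi R))
            (\<lambda>x. (x, sqrt (R\<^sup>2 - (norm x)\<^sup>2))))"

definition mu_minus :: "real \<Rightarrow> ('m::finite) pt measure" where
  "mu_minus R = scale_measure (ennreal (sphere_area (CARD('m) + 1)))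
     (distr (restrict_space lborel (cball (0::real^'m) R))
            (restrict_space borel (lower_hemi R))
            (\<lambda>x. (x, - sqrt (R\<^sup>2 - (norm x)\<^sup>2))))"

definition admissible_plan :: "real \<Rightarrow> (('m::finite) pt \<times> 'm pt) measure \<Rightarrow> bool" where
  "admissible_plan R \<nu> \<longleftrightarrow>
     sets \<nu> = sets (restrict_space borel (lower_hemi R \<times> upper_hemi R)) \<and>
     space \<nu> = lower_hemi R \<times> upper_hemi R \<and>
     distr \<nu> (restrict_space borel (lower_hemi R)) fst = mu_minus R \<and>
     distr \<nu> (restrict_space borel (upper_hemi R)) snd = mu_plus R"

end

theory Submission
  imports Defs
begin

text \<open>The cost \<open>|\<eta> - \<eta>\<^sup>+|\<close> dominates the vertical gap \<open>\<eta>\<^sup>+\<^sub>d - \<eta>\<^sub>d \<ge> 0\<close>, whose integral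
  against a plan depends only on the marginals \<open>\<mu>\<^sub>\<plusminus>\<close>.  Pulling these back to the ball
  \<open>|x| \<le> R\<close> in \<open>\<real>\<^sup>d\<^sup>-\<^sup>1\<close>, the gap integral becomes \<open>s\<^sub>d\<^sub>-\<^sub>1 \<integral> 2 \<surd>(R\<^sup>2 - |x|\<^sup>2) dx\<close>, and by
  Cavalieri's principle this is \<open>s\<^sub>d\<^sub>-\<^sub>1\<close> times the volume of the \<open>d\<close>-ball of radius \<open>R\<close>.
  The vertical plan pairs each point of the lower hemisphere with the point directly above it,
  so its cost is exactly the gap and the bound is attained.\<close>

abbreviation hemisphere_height :: "real \<Rightarrow> 'a::real_normed_vector \<Rightarrow> real" where
  "hemisphere_height R x \<equiv> sqrt (R\<^sup>2 - (norm x)\<^sup>2)"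

lemma ball_vol_eq_unit_ball_vol:
  assumes "n > 0"
  shows "ball_vol n = unit_ball_vol (real n)"
proof -
  from assms have Gamma_succ: "Gamma (real n / 2 + 1) = (real n / 2) * Gamma (real n / 2)"
    using Gamma_plus1[of "real n / 2"] nonpos_Ints_nonpos[of "real n / 2"] by force
  have "Gamma (real n / 2) > 0"
    using assms by (intro Gamma_real_pos) simp
  then show ?thesis
    using assms unfolding ball_vol_def unit_ball_vol_def Gamma_succ by (simp add: field_simps)
qed

lemma sphere_area_pos: "sphere_area (Suc n) > 0"
  unfolding sphere_area_def by (intro divide_pos_pos mult_pos_pos Gamma_real_pos) auto

lemma distr_scale_measure:
  assumes "f \<in> measurable M N"
  shows "distr (scale_measure r M) N f = scale_measure r (distr M N f)"
proof (rule measure_eqI)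
  fix A assume "A \<in> sets (distr (scale_measure r M) N f)"
  moreover have "f \<in> measurable (scale_measure r M) N"
    using assms by (simp add: measurable_def space_scale_measure)
  ultimately show "emeasure (distr (scale_measure r M) N f) A = emeasure (scale_measure r (distr M N f)) A"
    using assms by (simp add: emeasure_distr space_scale_measure)
qed simp

lemma AE_scale_measure:
  assumes "AE x in M. P x"
  shows "AE x in scale_measure r M. P x"
proof -
  from assms obtain N where N: "{x\<in>space M. \<not> P x} \<subseteq> N" "emeasure M N = 0" "N \<in> sets M"
    by (rule AE_E)
  then have "N \<in> null_sets (scale_measure r M)"
    by (simp add: null_sets_def)
  with N show ?thesis
    by (intro AE_I[where N=N]) (simp_all add: space_scale_measure)
qed

lemma graph_mem_hemispheres:
  fixes x :: "real^'m::finite"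
  assumes "norm x \<le> R"
  shows "(x, hemisphere_height R x) \<in> upper_hemi R"
    and "(x, - hemisphere_height R x) \<in> lower_hemi R"
proof -
  have "R \<ge> 0"
    using assms norm_ge_zero[of x] by linarith
  moreover have "(norm x)\<^sup>2 \<le> R\<^sup>2"
    using assms by (simp add: power_mono)
  ultimately show "(x, hemisphere_height R x) \<in> upper_hemi R"
    and "(x, - hemisphere_height R x) \<in> lower_hemi R"
    by (simp_all add: upper_hemi_def lower_hemi_def norm_Pair)
qed

lemma vimage_Pair_cball:
  fixes x :: "'a::real_normed_vector"
  shows "Pair x -` cball (0 :: 'a \<times> real) R =
           (if norm x \<le> R then {- hemisphere_height R x .. hemisphere_height R x} else {})"
proof (cases "norm x \<le> R")
  case True
  then have "(norm x)\<^sup>2 \<le> R\<^sup>2"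
    by (simp add: power_mono)
  moreover have "sqrt ((norm x)\<^sup>2 + y\<^sup>2) \<le> R \<longleftrightarrow> \<bar>y\<bar> \<le> hemisphere_height R x" for y :: real
    using True norm_ge_zero[of x]
    by (smt (verit) real_sqrt_abs real_sqrt_le_iff real_sqrt_le_mono sqrt_le_D)
  ultimately show ?thesis
    using True by (auto simp: norm_Pair dist_norm abs_le_iff)
next
  case False
  then show ?thesis
    by (auto simp: norm_Pair dist_norm dest: order.trans[OF real_sqrt_sum_squares_ge1])
qed

lemma emeasure_cball_prod_real:
  "emeasure (lborel :: ('a::euclidean_space \<times> real) measure) (cball 0 R)
     = (\<integral>\<^sup>+x. ennreal (2 * hemisphere_height R x) * indicator (cball (0::'a) R) x \<partial>lborel)"
proof -
  have "emeasure lborel (cball (0::'a \<times> real) R) = emeasure (lborel \<Otimes>\<^sub>M lborel) (cball (0::'a \<times> real) R)"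
    by (simp add: lborel_prod)
  also have "\<dots> = (\<integral>\<^sup>+x. emeasure lborel (Pair x -` cball (0::'a \<times> real) R) \<partial>lborel)"
    by (rule lborel.emeasure_pair_measure_alt)
      (simp only: lborel_prod sets_lborel, rule borel_closed, rule closed_cball)
  also have "\<dots> = (\<integral>\<^sup>+x. ennreal (2 * hemisphere_height R x) * indicator (cball (0::'a) R) x \<partial>lborel)"
  proof (rule nn_integral_cong)
    fix x :: 'a
    show "emeasure lborel (Pair x -` cball (0::'a \<times> real) R) = ennreal (2 * hemisphere_height R x) * indicator (cball 0 R) x"
    proof (cases "norm x \<le> R")
      case True
      then have "(norm x)\<^sup>2 \<le> R\<^sup>2"
        by (simp add: power_mono)
      with True show ?thesis
        by (simp add: vimage_Pair_cball emeasure_lborel_Icc)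
    qed (simp add: vimage_Pair_cball)
  qed
  finally show ?thesis .
qed

lemma nn_integral_cball_height:
  fixes R :: real
  assumes "R \<ge> 0"
  shows "(\<integral>\<^sup>+x. ennreal (2 * hemisphere_height R x) * indicator (cball (0::'a::euclidean_space) R) x \<partial>lborel)
           = ennreal (ball_vol (DIM('a) + 1) * R ^ (DIM('a) + 1))"
proof -
  have "(\<integral>\<^sup>+x. ennreal (2 * hemisphere_height R x) * indicator (cball (0::'a) R) x \<partial>lborel)
      = emeasure (lborel :: ('a \<times> real) measure) (cball 0 R)"
    by (rule emeasure_cball_prod_real[symmetric])
  also have "\<dots> = ennreal (unit_ball_vol (DIM('a \<times> real)) * R ^ DIM('a \<times> real))"
    using assms by (rule emeasure_cball)
  finally show ?thesis
    by (simp add: ball_vol_eq_unit_ball_vol)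
qed

lemma vertical_gap_le_norm_diff:
  fixes p q :: "'a::real_normed_vector \<times> real"
  shows "snd q - snd p \<le> norm (p - q)"
proof -
  have "snd q - snd p \<le> norm (snd (p - q))"
    by simp
  also have "\<dots> \<le> norm (p - q)"
    by (metis norm_snd_le prod.collapse)
  finally show ?thesis .
qed

lemma measurable_upper_graph:
  "(\<lambda>x. (x, hemisphere_height R x))
     \<in> restrict_space lborel (cball (0::real^'m::finite) R) \<rightarrow>\<^sub>M restrict_space borel (upper_hemi R)"
proof (rule measurable_restrict_space2)
  show "(\<lambda>x. (x, hemisphere_height R x)) \<in> space (restrict_space lborel (cball 0 R)) \<rightarrow> upper_hemi R"
    by (auto simp: space_restrict_space intro: graph_mem_hemispheres)
qed (rule measurable_restrict_space1, measurable)

lemma measurable_lower_graph: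
  "(\<lambda>x. (x, - hemisphere_height R x))
     \<in> restrict_space lborel (cball (0::real^'m::finite) R) \<rightarrow>\<^sub>M restrict_space borel (lower_hemi R)"
proof (rule measurable_restrict_space2)
  show "(\<lambda>x. (x, - hemisphere_height R x)) \<in> space (restrict_space lborel (cball 0 R)) \<rightarrow> lower_hemi R"
    by (auto simp: space_restrict_space intro: graph_mem_hemispheres)
qed (rule measurable_restrict_space1, measurable)

lemma nn_integral_mu_plus:
  assumes "f \<in> borel_measurable (borel :: ('m::finite) pt measure)"
  shows "(\<integral>\<^sup>+\<eta>. f \<eta> \<partial>mu_plus R) = ennreal (sphere_area (CARD('m) + 1)) *
           (\<integral>\<^sup>+x. f (x, hemisphere_height R x) * indicator (cball 0 R) x \<partial>lborel)"
proof -
  have "f \<in> borel_measurable (restrict_space borel (upper_hemi R))"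
    using assms by (rule measurable_restrict_space1)
  then show ?thesis
    unfolding mu_plus_def
    by (simp add: nn_integral_scale_measure nn_integral_distr[OF measurable_upper_graph]
        nn_integral_restrict_space)
qed

lemma nn_integral_mu_minus:
  assumes "f \<in> borel_measurable (borel :: ('m::finite) pt measure)"
  shows "(\<integral>\<^sup>+\<eta>. f \<eta> \<partial>mu_minus R) = ennreal (sphere_area (CARD('m) + 1)) *
           (\<integral>\<^sup>+x. f (x, - hemisphere_height R x) * indicator (cball 0 R) x \<partial>lborel)"
proof -
  have "f \<in> borel_measurable (restrict_space borel (lower_hemi R))"
    using assms by (rule measurable_restrict_space1)
  then show ?thesis
    unfolding mu_minus_def
    by (simp add: nn_integral_scale_measure nn_integral_distr[OF measurable_lower_graph]
        nn_integral_restrict_space)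
qed

lemma borel_measurable_fst_snd [measurable]:
  "fst \<in> borel_measurable (borel :: ('a::topological_space \<times> 'b::topological_space) measure)"
  "snd \<in> borel_measurable (borel :: ('a::topological_space \<times> 'b::topological_space) measure)"
  by (intro borel_measurable_continuous_onI continuous_intros)+

lemma measurable_fst_snd_restrict_space:
  fixes A :: "'a::topological_space set" and B :: "'b::topological_space set"
  shows "fst \<in> restrict_space borel (A \<times> B) \<rightarrow>\<^sub>M restrict_space borel A"
    and "snd \<in> restrict_space borel (A \<times> B) \<rightarrow>\<^sub>M restrict_space borel B"
  by (auto intro!: measurable_restrict_space2 measurable_restrict_space1[OF borel_measurable_fst_snd(1)]
      measurable_restrict_space1[OF borel_measurable_fst_snd(2)] simp: space_restrict_space)

lemma admissible_plan_measurable: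
  assumes "admissible_plan R \<nu>"
  shows "fst \<in> \<nu> \<rightarrow>\<^sub>M restrict_space borel (lower_hemi R)"
    and "snd \<in> \<nu> \<rightarrow>\<^sub>M restrict_space borel (upper_hemi R)"
proof -
  have "sets \<nu> = sets (restrict_space borel (lower_hemi R \<times> upper_hemi R))"
    using assms by (simp add: admissible_plan_def)
  then have sets_eq: "measurable \<nu> N = measurable (restrict_space borel (lower_hemi R \<times> upper_hemi R)) N"
    for N by (rule measurable_cong_sets) simp
  show "fst \<in> \<nu> \<rightarrow>\<^sub>M restrict_space borel (lower_hemi R)"
    unfolding sets_eq by (rule measurable_fst_snd_restrict_space(1))
  show "snd \<in> \<nu> \<rightarrow>\<^sub>M restrict_space borel (upper_hemi R)"
    unfolding sets_eq by (rule measurable_fst_snd_restrict_space(2))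
qed

lemma borel_measurable_ennreal_height:
  "(\<lambda>\<eta>::'a::topological_space \<times> real. ennreal (snd \<eta>)) \<in> borel_measurable borel"
  "(\<lambda>\<eta>::'a::topological_space \<times> real. ennreal (- snd \<eta>)) \<in> borel_measurable borel"
  by measurable

lemma nn_integral_height_admissible_plan:
  fixes \<nu> :: "('m::finite pt \<times> 'm pt) measure"
  assumes "admissible_plan R \<nu>"
  shows "(\<integral>\<^sup>+p. ennreal (snd (snd p)) \<partial>\<nu>) = ennreal (sphere_area (CARD('m) + 1)) *
           (\<integral>\<^sup>+x. ennreal (hemisphere_height R x) * indicator (cball (0::real^'m) R) x \<partial>lborel)"
    and "(\<integral>\<^sup>+p. ennreal (- snd (fst p)) \<partial>\<nu>) = ennreal (sphere_area (CARD('m) + 1)) *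
           (\<integral>\<^sup>+x. ennreal (hemisphere_height R x) * indicator (cball (0::real^'m) R) x \<partial>lborel)"
proof -
  note height_meas = borel_measurable_ennreal_height[where 'a="real^'m"]
  have "(\<integral>\<^sup>+p. ennreal (snd (snd p)) \<partial>\<nu>)
      = (\<integral>\<^sup>+\<eta>. ennreal (snd \<eta>) \<partial>distr \<nu> (restrict_space borel (upper_hemi R)) snd)"
    by (rule nn_integral_distr[symmetric, OF admissible_plan_measurable(2)[OF assms]])
      (simp add: measurable_restrict_space1 height_meas)
  also have "\<dots> = (\<integral>\<^sup>+\<eta>. ennreal (snd \<eta>) \<partial>(mu_plus R :: 'm pt measure))"
    using assms by (simp add: admissible_plan_def)
  finally show "(\<integral>\<^sup>+p. ennreal (snd (snd p)) \<partial>\<nu>) = ennreal (sphere_area (CARD('m) + 1)) *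
           (\<integral>\<^sup>+x. ennreal (hemisphere_height R x) * indicator (cball (0::real^'m) R) x \<partial>lborel)"
    by (simp add: nn_integral_mu_plus height_meas)
  have "(\<integral>\<^sup>+p. ennreal (- snd (fst p)) \<partial>\<nu>)
      = (\<integral>\<^sup>+\<eta>. ennreal (- snd \<eta>) \<partial>distr \<nu> (restrict_space borel (lower_hemi R)) fst)"
    by (rule nn_integral_distr[symmetric, OF admissible_plan_measurable(1)[OF assms]])
      (simp add: measurable_restrict_space1 height_meas)
  also have "\<dots> = (\<integral>\<^sup>+\<eta>. ennreal (- snd \<eta>) \<partial>(mu_minus R :: 'm pt measure))"
    using assms by (simp add: admissible_plan_def)
  finally show "(\<integral>\<^sup>+p. ennreal (- snd (fst p)) \<partial>\<nu>) = ennreal (sphere_area (CARD('m) + 1)) *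
           (\<integral>\<^sup>+x. ennreal (hemisphere_height R x) * indicator (cball (0::real^'m) R) x \<partial>lborel)"
    by (simp add: nn_integral_mu_minus height_meas)
qed

lemma admissible_plan_cost_ge:
  fixes \<nu> :: "('m::finite pt \<times> 'm pt) measure"
  assumes "admissible_plan R \<nu>"
  shows "ennreal (sphere_area (CARD('m) + 1)) *
           (\<integral>\<^sup>+x. ennreal (2 * hemisphere_height R x) * indicator (cball (0::real^'m) R) x \<partial>lborel)
         \<le> (\<integral>\<^sup>+p. ennreal (norm (fst p - snd p)) \<partial>\<nu>)"
proof -
  define s where "s = ennreal (sphere_area (CARD('m) + 1))"
  define I where "I = (\<integral>\<^sup>+x. ennreal (hemisphere_height R x) * indicator (cball (0::real^'m) R) x \<partial>lborel)"
  have [measurable]: "cball (0::real^'m) R \<in> sets borel"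
    by (simp add: borel_closed)
  have "s * (\<integral>\<^sup>+x. ennreal (2 * hemisphere_height R x) * indicator (cball (0::real^'m) R) x \<partial>lborel)
      = s * (2 * I)"
    unfolding I_def
    by (subst nn_integral_cmult[symmetric])
      (auto intro!: nn_integral_cong simp: ennreal_mult' mult.assoc)
  also have "\<dots> = s * I + s * I"
    by (simp only: mult_2 distrib_left)
  also have "\<dots> = (\<integral>\<^sup>+p. ennreal (snd (snd p)) \<partial>\<nu>) + (\<integral>\<^sup>+p. ennreal (- snd (fst p)) \<partial>\<nu>)"
    unfolding s_def I_def nn_integral_height_admissible_plan[OF assms] ..
  also have "\<dots> = (\<integral>\<^sup>+p. ennreal (snd (snd p)) + ennreal (- snd (fst p)) \<partial>\<nu>)"
    using measurable_compose[OF admissible_plan_measurable(2)[OF assms]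
          measurable_restrict_space1[OF borel_measurable_ennreal_height(1)]]
      measurable_compose[OF admissible_plan_measurable(1)[OF assms]
          measurable_restrict_space1[OF borel_measurable_ennreal_height(2)]]
    by (intro nn_integral_add[symmetric]) (simp_all add: comp_def)
  also have "\<dots> \<le> (\<integral>\<^sup>+p. ennreal (norm (fst p - snd p)) \<partial>\<nu>)"
  proof (rule nn_integral_mono)
    fix p assume "p \<in> space \<nu>"
    then have "snd (fst p) \<le> 0" and "snd (snd p) \<ge> 0"
      using assms by (auto simp: admissible_plan_def lower_hemi_def upper_hemi_def)
    then show "ennreal (snd (snd p)) + ennreal (- snd (fst p)) \<le> ennreal (norm (fst p - snd p))"
      using vertical_gap_le_norm_diff[where p="fst p" and q="snd p"]
      by (simp add: ennreal_plus[symmetric] del: ennreal_plus)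
  qed
  finally show ?thesis
    unfolding s_def .
qed

definition vertical_plan :: "real \<Rightarrow> ('m::finite pt \<times> 'm pt) measure" where
  "vertical_plan R = scale_measure (ennreal (sphere_area (CARD('m) + 1)))
     (distr (restrict_space lborel (cball 0 R)) (restrict_space borel (lower_hemi R \<times> upper_hemi R))
        (\<lambda>x. ((x, - hemisphere_height R x), (x, hemisphere_height R x))))"

lemma measurable_vertical_graph:
  "(\<lambda>x. ((x, - hemisphere_height R x), (x, hemisphere_height R x)))
     \<in> restrict_space lborel (cball (0::real^'m::finite) R)
        \<rightarrow>\<^sub>M restrict_space borel (lower_hemi R \<times> upper_hemi R)"
proof (rule measurable_restrict_space2)
  show "(\<lambda>x. ((x, - hemisphere_height R x), (x, hemisphere_height R x)))
          \<in> space (restrict_space lborel (cball 0 R)) \<rightarrow> lower_hemi R \<times> upper_hemi R"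
    by (auto simp: space_restrict_space intro: graph_mem_hemispheres)
qed (rule measurable_restrict_space1, measurable)

lemma admissible_plan_vertical_plan:
  "admissible_plan R (vertical_plan R :: ('m::finite pt \<times> 'm pt) measure)"
proof -
  note graph = measurable_vertical_graph[where R=R and 'm='m]
  note proj = measurable_fst_snd_restrict_space[where A="lower_hemi R" and B="upper_hemi R"]
  show ?thesis
    unfolding admissible_plan_def vertical_plan_def mu_minus_def mu_plus_def
    by (simp add: space_scale_measure space_restrict_space distr_scale_measure proj
        distr_distr[OF proj(1) graph] distr_distr[OF proj(2) graph] comp_def)
qed

lemma AE_vertical_plan:
  "AE p in (vertical_plan R :: ('m::finite pt \<times> 'm pt) measure). fst (fst p) = fst (snd p)"
proof -
  have "closed {p :: 'm pt \<times> 'm pt. fst (fst p) = fst (snd p)}"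
    by (intro closed_Collect_eq continuous_intros)
  then have "{p \<in> space (restrict_space borel (lower_hemi R \<times> upper_hemi R)). fst (fst p) = fst (snd p)}
      \<in> sets (restrict_space borel (lower_hemi R \<times> upper_hemi R))"
    by (auto simp: space_restrict_space sets_restrict_space Collect_conj_eq intro: borel_closed)
  then show ?thesis
    unfolding vertical_plan_def
    by (intro AE_scale_measure, subst AE_distr_iff[OF measurable_vertical_graph]) auto
qed

lemma norm_diff_Pair_same_fst:
  fixes x :: "'a::real_normed_vector" and a b :: "'b::real_normed_vector"
  shows "norm ((x, a) - (x, b)) = norm (a - b)"
  by (simp add: norm_Pair)

lemma nn_integral_vertical_plan_cost:
  "(\<integral>\<^sup>+p. ennreal (norm (fst p - snd p)) \<partial>(vertical_plan R :: ('m::finite pt \<times> 'm pt) measure))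
     = ennreal (sphere_area (CARD('m) + 1)) *
         (\<integral>\<^sup>+x. ennreal (2 * hemisphere_height R x) * indicator (cball (0::real^'m) R) x \<partial>lborel)"
proof -
  have "(\<lambda>p::'m pt \<times> 'm pt. ennreal (norm (fst p - snd p)))
          \<in> borel_measurable (restrict_space borel (lower_hemi R \<times> upper_hemi R))"
    by (rule measurable_restrict_space1) measurable
  then have "(\<integral>\<^sup>+p. ennreal (norm (fst p - snd p)) \<partial>(vertical_plan R :: ('m pt \<times> 'm pt) measure))
      = ennreal (sphere_area (CARD('m) + 1)) *
          (\<integral>\<^sup>+x. ennreal (norm ((x, - hemisphere_height R x) - (x, hemisphere_height R x)))
                 * indicator (cball (0::real^'m) R) x \<partial>lborel)"
    unfolding vertical_plan_def
    by (simp add: nn_integral_scale_measure nn_integral_distr[OF measurable_vertical_graph]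
        nn_integral_restrict_space del: norm_Pair)
  also have "\<dots> = ennreal (sphere_area (CARD('m) + 1)) *
         (\<integral>\<^sup>+x. ennreal (2 * hemisphere_height R x) * indicator (cball (0::real^'m) R) x \<partial>lborel)"
  proof -
    have "ennreal (norm ((x, - hemisphere_height R x) - (x, hemisphere_height R x)))
          * indicator (cball 0 R) x
        = ennreal (2 * hemisphere_height R x) * indicator (cball 0 R) x" for x :: "real^'m"
    proof -
      have "(norm x)\<^sup>2 \<le> R\<^sup>2" if "norm x \<le> R"
        using that by (simp add: power_mono)
      then show ?thesis
        by (simp add: norm_diff_Pair_same_fst indicator_def)
    qed
    then show ?thesis
      by (simp only:)
  qed
  finally show ?thesis .
qed

theorem mainTheorem7:
  fixes R :: real
  assumes "R > 0"
  shows "(\<forall>\<nu> :: ('m::finite pt \<times> 'm pt) measure. admissible_plan R \<nu> \<longrightarrow>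
            (\<integral>\<^sup>+ p. ennreal (norm (fst p - snd p)) \<partial>\<nu>)
              \<ge> ennreal (sphere_area (CARD('m) + 1) * ball_vol (CARD('m) + 1) * R ^ (CARD('m) + 1)))
       \<and> (\<exists>\<nu> :: ('m pt \<times> 'm pt) measure. admissible_plan R \<nu> \<and>
            (AE p in \<nu>. fst (fst p) = fst (snd p)) \<and>
            (\<integral>\<^sup>+ p. ennreal (norm (fst p - snd p)) \<partial>\<nu>)
              = ennreal (sphere_area (CARD('m) + 1) * ball_vol (CARD('m) + 1) * R ^ (CARD('m) + 1)))"
proof -
  have vol: "ennreal (sphere_area (CARD('m) + 1)) *
          (\<integral>\<^sup>+x. ennreal (2 * hemisphere_height R x) * indicator (cball (0::real^'m) R) x \<partial>lborel)
      = ennreal (sphere_area (CARD('m) + 1) * ball_vol (CARD('m) + 1) * R ^ (CARD('m) + 1))"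
    using nn_integral_cball_height[where 'a="real^'m" and R=R] assms
      less_imp_le[OF sphere_area_pos[of "CARD('m)"]]
    by (simp add: ennreal_mult' mult.assoc)
  show ?thesis
  proof (intro conjI allI impI exI[where x="vertical_plan R"])
    fix \<nu> :: "('m pt \<times> 'm pt) measure"
    assume "admissible_plan R \<nu>"
    then show "(\<integral>\<^sup>+ p. ennreal (norm (fst p - snd p)) \<partial>\<nu>)
        \<ge> ennreal (sphere_area (CARD('m) + 1) * ball_vol (CARD('m) + 1) * R ^ (CARD('m) + 1))"
      unfolding vol[symmetric] by (rule admissible_plan_cost_ge)
  qed (simp_all only: admissible_plan_vertical_plan AE_vertical_plan nn_integral_vertical_plan_cost vol)
qed

end
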